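(* Let $A$ be a complex unital Banach algebra and $a,b\in A$ with $d_\rho(a,b)=0$. Suppose $h$ is an entire complex function, not identically zero, all of whose zeros are simple, and that the holomorphic functional calculus elements satisfy $h(a)=h(b)=0$. Then $a=b$.
   Context: For $a,b\in A$ and $n\geq 0$ put $C_{a,b}^n\mathbf 1=\sum_{k=0}^n(-1)^k\binom{n}{k}a^{n-k}b^k$ (with $a^0=b^0=\mathbf 1$). Define $\rho(a,b)=\limsup_{n\to\infty}\|C_{a,b}^n\mathbf 1\|^{1/n}$ and $d_\rho(a,b)=\max\{\rho(a,b),\rho(b,a)\}$. *)

theory Defs
  imports "HOL-Analysis.Analysis"
begin

class cbanach_algebra_1 = real_normed_algebra_1 + banach +
  fixes scaleC :: "complex \<Rightarrow> 'a \<Rightarrow> 'a"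
  assumes scaleC_add_right: "scaleC c (x + y) = scaleC c x + scaleC c y"
    and scaleC_add_left: "scaleC (c + d) x = scaleC c x + scaleC d x"
    and scaleC_scaleC: "scaleC c (scaleC d x) = scaleC (c * d) x"
    and scaleC_one: "scaleC 1 x = x"
    and scaleC_of_real: "scaleC (complex_of_real r) x = scaleR r x"
    and norm_scaleC: "norm (scaleC c x) = cmod c * norm x"
    and mult_scaleC_left: "scaleC c x * y = scaleC c (x * y)"
    and mult_scaleC_right: "x * scaleC c y = scaleC c (x * y)"

text \<open>C^n_{a,b} 1 = sum_{k=0}^n (-1)^k (n choose k) a^(n-k) b^k\<close>
definition Cab :: "'a::ring_1 \<Rightarrow> 'a \<Rightarrow> nat \<Rightarrow> 'a" where
  "Cab a b n = (\<Sum>k\<le>n. of_int ((-1) ^ k * int (n choose k)) * (a ^ (n - k) * b ^ k))"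

definition rho :: "'a::real_normed_algebra_1 \<Rightarrow> 'a \<Rightarrow> ereal" where
  "rho a b = limsup (\<lambda>n. ereal (root n (norm (Cab a b n))))"

definition d_rho :: "'a::real_normed_algebra_1 \<Rightarrow> 'a \<Rightarrow> ereal" where
  "d_rho a b = max (rho a b) (rho b a)"

text \<open>Holomorphic functional calculus of an entire function h at a: for entire h
 it is given by the everywhere convergent Taylor series at 0.\<close>
definition hfc :: "(complex \<Rightarrow> complex) \<Rightarrow> 'a::cbanach_algebra_1 \<Rightarrow> 'a" where
  "hfc h a = (\<Sum>n. scaleC ((deriv ^^ n) h 0 / fact n) (a ^ n))"

end

theory Submission
  imports Defs "HOL-Complex_Analysis.Complex_Analysis" "HOL-Computational_Algebra.Polynomial"
begin

text \<open>Let \<open>p\<close> be the monic polynomial whose roots are the zeros of \<open>h\<close> in a disc containing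
  \<open>a\<close> and \<open>b\<close>. These zeros are simple, so \<open>h = p g\<close> with \<open>g\<close> zero-free on the disc, and
  \<open>g(a)\<close>, \<open>g(b)\<close> are invertible; hence \<open>p(a) = p(b) = 0\<close>. Since \<open>p\<close> has simple roots, the
  Lagrange basis polynomials \<open>\<ell>\<^sub>w\<close> of its roots give idempotent decompositions
  \<open>1 = \<Sum> E\<^sub>w\<close>, \<open>E\<^sub>w a = w E\<^sub>w\<close> with \<open>E\<^sub>w = \<ell>\<^sub>w(a)\<close>, and similarly \<open>b Q\<^sub>v = v Q\<^sub>v\<close>.
  Then \<open>Cab a b n = \<Sum> (w - v)\<^sup>n E\<^sub>w Q\<^sub>v\<close> is a finite exponential sum in \<open>n\<close>; \<open>\<rho>(a,b) = 0\<close>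
  forces its coefficients at all nonzero frequencies to vanish, and so \<open>a - b = Cab a b 1 = 0\<close>.\<close>

global_interpretation scaleC: vector_space "scaleC :: complex \<Rightarrow> 'a \<Rightarrow> 'a::cbanach_algebra_1"
  by unfold_locales (simp_all add: scaleC_add_right scaleC_add_left scaleC_scaleC scaleC_one)

lemma scaleC_mult_scaleC:
  "scaleC c (x::'a::cbanach_algebra_1) * scaleC d y = scaleC (c * d) (x * y)"
  by (simp add: mult_scaleC_left mult_scaleC_right mult.commute)

lemma of_int_mult_eq_scaleC: "of_int k * (x::'a::cbanach_algebra_1) = scaleC (of_int k) x"
  by (metis of_real_of_int_eq scaleR_conv_of_real scaleC_of_real)

lemma mult_power_eq_scaleC_power:
  assumes "e * x = scaleC w (e::'a::cbanach_algebra_1)"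
  shows "e * x ^ m = scaleC (w ^ m) e"
proof (induction m)
  case (Suc m)
  have "e * x ^ Suc m = (e * x ^ m) * x" by (simp only: power_Suc2 mult.assoc)
  also have "\<dots> = scaleC (w ^ m) (e * x)" by (simp add: Suc mult_scaleC_left)
  finally show ?case by (simp add: assms mult.commute)
qed simp

lemma power_mult_eq_scaleC_power:
  assumes "x * e = scaleC w (e::'a::cbanach_algebra_1)"
  shows "x ^ m * e = scaleC (w ^ m) e"
proof (induction m)
  case (Suc m)
  have "x ^ Suc m * e = scaleC (w ^ m) (x * e)"
    by (simp add: Suc mult_scaleC_right mult.assoc)
  then show ?case by (simp add: assms mult.commute)
qed simp

definition taylor_coeff :: "(complex \<Rightarrow> complex) \<Rightarrow> nat \<Rightarrow> complex" where
  "taylor_coeff f n = (deriv ^^ n) f 0 / fact n"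

lemma hfc_taylor_coeff: "hfc f x = (\<Sum>n. scaleC (taylor_coeff f n) (x ^ n))"
  by (simp add: hfc_def taylor_coeff_def)

text \<open>By the Cauchy inequalities on a circle of radius strictly between \<open>norm x\<close> and \<open>R\<close>,
  the series is dominated by a convergent geometric series.\<close>

lemma summable_norm_hfc_series:
  assumes hol: "f holomorphic_on ball 0 R" and xR: "norm (x::'a::cbanach_algebra_1) < R"
  shows "summable (\<lambda>n. norm (scaleC (taylor_coeff f n) (x ^ n)))"
proof -
  define r where "r = (norm x + R) / 2"
  have r: "0 < r" "norm x < r" "r < R"
    using xR norm_ge_zero[of x] unfolding r_def by (auto simp del: norm_ge_zero)
  have hol_r: "f holomorphic_on cball 0 r"
    by (rule holomorphic_on_subset[OF hol]) (use r in auto)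
  then have "compact (f ` cball 0 r)"
    by (intro compact_continuous_image holomorphic_on_imp_continuous_on) auto
  then obtain B where B: "\<And>z. z \<in> cball 0 r \<Longrightarrow> norm (f z) \<le> B"
    by (meson bounded_iff compact_imp_bounded image_eqI)
  have bound: "norm (norm (scaleC (taylor_coeff f n) (x ^ n))) \<le> B * (norm x / r) ^ n" for n
  proof -
    have "norm ((deriv ^^ n) f 0) \<le> fact n * B / r ^ n"
      using hol_r r(1) B
      by (intro Cauchy_inequality) (auto intro: holomorphic_on_subset holomorphic_on_imp_continuous_on)
    then have "cmod ((deriv ^^ n) f 0) / fact n \<le> (fact n * B / r ^ n) / fact n"
      by (rule divide_right_mono) simp
    then have "cmod (taylor_coeff f n) \<le> B / r ^ n"
      by (simp add: taylor_coeff_def norm_divide)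
    then have "cmod (taylor_coeff f n) * norm (x ^ n) \<le> B / r ^ n * norm x ^ n"
      by (intro mult_mono norm_power_ineq) (auto intro: order_trans[OF norm_ge_zero])
    then show ?thesis by (simp add: norm_scaleC power_divide)
  qed
  have "summable (\<lambda>n. B * (norm x / r) ^ n)"
    using r by (intro summable_mult summable_geometric) simp
  then show ?thesis by (rule summable_comparison_test'[where N = 0]) (use bound in auto)
qed

lemma taylor_coeff_mult:
  assumes f: "f holomorphic_on ball 0 R" and g: "g holomorphic_on ball 0 R" and "0 < R"
  shows "taylor_coeff (\<lambda>z. f z * g z) k = (\<Sum>i\<le>k. taylor_coeff f i * taylor_coeff g (k - i))"
proof -
  have "(deriv ^^ k) (\<lambda>z. f z * g z) 0 =
        (\<Sum>i\<le>k. of_nat (k choose i) * (deriv ^^ i) f 0 * (deriv ^^ (k - i)) g 0)"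
    using higher_deriv_mult[OF f g open_ball] \<open>0 < R\<close> by (simp add: atLeast0AtMost)
  moreover have "of_nat (k choose i) * A * B / fact k = A / fact i * (B / fact (k - i))"
    if "i \<le> k" for i and A B :: complex
    using that by (simp add: binomial_fact field_simps)
  ultimately show ?thesis
    by (simp add: taylor_coeff_def sum_divide_distrib)
qed

lemma hfc_mult:
  assumes f: "f holomorphic_on ball 0 R" and g: "g holomorphic_on ball 0 R"
    and xR: "norm (x::'a::cbanach_algebra_1) < R"
  shows "hfc (\<lambda>z. f z * g z) x = hfc f x * hfc g x"
proof -
  have R: "0 < R" using norm_ge_zero[of x] xR by linarith
  have coeff: "(\<Sum>i\<le>k. scaleC (taylor_coeff f i) (x ^ i) * scaleC (taylor_coeff g (k - i)) (x ^ (k - i)))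
      = scaleC (taylor_coeff (\<lambda>z. f z * g z) k) (x ^ k)" for k
  proof -
    have "x ^ i * x ^ (k - i) = x ^ k" if "i \<le> k" for i
      using that by (simp flip: power_add)
    then show ?thesis
      by (simp add: taylor_coeff_mult[OF f g R] scaleC_mult_scaleC scaleC.scale_sum_left)
  qed
  have "hfc f x * hfc g x = (\<Sum>k. \<Sum>i\<le>k.
      scaleC (taylor_coeff f i) (x ^ i) * scaleC (taylor_coeff g (k - i)) (x ^ (k - i)))"
    unfolding hfc_taylor_coeff
    by (rule Cauchy_product[OF summable_norm_hfc_series[OF f xR] summable_norm_hfc_series[OF g xR]])
  then show ?thesis by (simp add: coeff hfc_taylor_coeff)
qed

lemma hfc_add:
  assumes f: "f holomorphic_on ball 0 R" and g: "g holomorphic_on ball 0 R"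
    and xR: "norm (x::'a::cbanach_algebra_1) < R"
  shows "hfc (\<lambda>z. f z + g z) x = hfc f x + hfc g x"
proof -
  have "0 < R" using norm_ge_zero[of x] xR by linarith
  then have "taylor_coeff (\<lambda>z. f z + g z) n = taylor_coeff f n + taylor_coeff g n" for n
    using higher_deriv_add[OF f g open_ball, of 0 n] by (simp add: taylor_coeff_def add_divide_distrib)
  moreover have "hfc f x + hfc g x =
      (\<Sum>n. scaleC (taylor_coeff f n) (x ^ n) + scaleC (taylor_coeff g n) (x ^ n))"
    unfolding hfc_taylor_coeff
    by (rule suminf_add[OF summable_norm_cancel[OF summable_norm_hfc_series[OF f xR]]
                           summable_norm_cancel[OF summable_norm_hfc_series[OF g xR]]])
  ultimately show ?thesis by (simp add: hfc_taylor_coeff scaleC.scale_left_distrib)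
qed

lemma hfc_const: "hfc (\<lambda>z. c) (x::'a::cbanach_algebra_1) = scaleC c 1"
proof -
  have "hfc (\<lambda>z. c) x = (\<Sum>n\<in>{0}. scaleC (taylor_coeff (\<lambda>z. c) n) (x ^ n))"
    unfolding hfc_taylor_coeff by (rule suminf_finite) (auto simp: taylor_coeff_def)
  then show ?thesis by (simp add: taylor_coeff_def)
qed

lemma hfc_ident: "hfc (\<lambda>z. z) (x::'a::cbanach_algebra_1) = x"
proof -
  have "hfc (\<lambda>z. z) x = (\<Sum>n\<in>{1}. scaleC (taylor_coeff (\<lambda>z. z) n) (x ^ n))"
    unfolding hfc_taylor_coeff by (rule suminf_finite) (auto simp: taylor_coeff_def)
  then show ?thesis by (simp add: taylor_coeff_def)
qed

lemma hfc_cmult: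
  assumes "f holomorphic_on ball 0 R" and "norm (x::'a::cbanach_algebra_1) < R"
  shows "hfc (\<lambda>z. c * f z) x = scaleC c (hfc f x)"
  using hfc_mult[of "\<lambda>z. c" R f x] assms by (simp add: hfc_const mult_scaleC_left)

lemma hfc_diff_const: "hfc (\<lambda>z. z - c) (x::'a::cbanach_algebra_1) = x - scaleC c 1"
  using hfc_add[of "\<lambda>z. z" "norm x + 1" "\<lambda>z. - c" x] by (simp add: hfc_ident hfc_const)

lemma hfc_sum:
  assumes "finite S" and "\<And>i. i \<in> S \<Longrightarrow> f i holomorphic_on ball 0 R"
    and xR: "norm (x::'a::cbanach_algebra_1) < R"
  shows "hfc (\<lambda>z. \<Sum>i\<in>S. f i z) x = (\<Sum>i\<in>S. hfc (f i) x)"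
  using assms(1,2)
proof (induction S rule: finite_induct)
  case (insert j S)
  then have "hfc (\<lambda>z. f j z + (\<Sum>i\<in>S. f i z)) x = hfc (f j) x + hfc (\<lambda>z. \<Sum>i\<in>S. f i z) x"
    by (intro hfc_add[OF _ _ xR] holomorphic_on_sum) auto
  with insert show ?case by simp
qed (simp add: hfc_const)

lemma hfc_cong:
  assumes "\<And>z. z \<in> ball 0 R \<Longrightarrow> f z = g z" and "0 < R"
  shows "hfc f x = hfc g x"
proof -
  have "eventually (\<lambda>z. f z = g z) (nhds 0)"
    unfolding eventually_nhds using assms by (intro exI[of _ "ball 0 R"]) auto
  then have "(deriv ^^ n) f 0 = (deriv ^^ n) g 0" for n
    by (rule higher_deriv_cong_ev) simp
  then show ?thesis by (simp add: hfc_def)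
qed

lemma entire_factor_finite_zeros:
  assumes "finite F" "\<forall>w\<in>F. f w = 0" "f holomorphic_on UNIV"
  shows "\<exists>g. g holomorphic_on UNIV \<and> (\<forall>z. f z = (\<Prod>w\<in>F. z - w) * g z)"
  using assms
proof (induction F arbitrary: f rule: finite_induct)
  case (insert w F)
  define f1 where "f1 = (\<lambda>z. if z = w then deriv f w else (f z - f w) / (z - w))"
  have "f1 holomorphic_on UNIV" unfolding f1_def by (rule pole_lemma) (use insert in auto)
  moreover have f_eq: "f z = (z - w) * f1 z" for z
    using insert by (cases "z = w") (auto simp: f1_def)
  moreover have "\<forall>v\<in>F. f1 v = 0"
    using insert f_eq by (metis diff_self insertCI mult_eq_0_iff right_minus_eq)
  ultimately obtain g where "g holomorphic_on UNIV" "\<forall>z. f1 z = (\<Prod>v\<in>F. z - v) * g z"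
    using insert.IH by blast
  with insert(1,2) f_eq show ?case by (auto simp: mult.assoc)
qed auto

lemma hfc_cancel_nonvanishing_factor:
  assumes p: "p holomorphic_on ball 0 R" and g: "g holomorphic_on ball 0 R"
    and g_nz: "\<And>z. z \<in> ball 0 R \<Longrightarrow> g z \<noteq> 0"
    and xR: "norm (x::'a::cbanach_algebra_1) < R" and pg_x: "hfc (\<lambda>z. p z * g z) x = 0"
  shows "hfc p x = 0"
proof -
  have R: "0 < R" using norm_ge_zero[of x] xR by linarith
  have inv_g: "(\<lambda>z. 1 / g z) holomorphic_on ball 0 R"
    by (intro holomorphic_intros g) (use g_nz in auto)
  have "hfc g x * hfc (\<lambda>z. 1 / g z) x = hfc (\<lambda>z. g z * (1 / g z)) x"
    by (rule hfc_mult[OF g inv_g xR, symmetric])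
  also have "\<dots> = hfc (\<lambda>z. 1) x"
    by (rule hfc_cong[OF _ R]) (use g_nz in auto)
  finally have inverse: "hfc g x * hfc (\<lambda>z. 1 / g z) x = 1"
    by (simp add: hfc_const)
  have "hfc p x = hfc p x * (hfc g x * hfc (\<lambda>z. 1 / g z) x)"
    by (simp add: inverse)
  also have "\<dots> = hfc (\<lambda>z. p z * g z) x * hfc (\<lambda>z. 1 / g z) x"
    by (simp add: hfc_mult[OF p g xR] mult.assoc)
  finally show ?thesis by (simp add: pg_x)
qed

lemma hfc_root_poly_eq_0:
  fixes x :: "'a::cbanach_algebra_1"
  assumes h: "h holomorphic_on UNIV" and h_nz: "\<exists>z. h z \<noteq> 0"
    and simple: "\<forall>z. h z = 0 \<longrightarrow> deriv h z \<noteq> 0"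
    and hx: "hfc h x = 0" and xR: "norm x < R"
  defines "F \<equiv> {z \<in> cball 0 R. h z = 0}"
  shows "finite F" and "hfc (\<lambda>z. \<Prod>w\<in>F. z - w) x = 0"
proof -
  have "\<not> h constant_on UNIV"
  proof
    assume "h constant_on UNIV"
    then obtain c where "h = (\<lambda>z. c)" unfolding constant_on_def by blast
    with h_nz hx show False by (auto simp: hfc_const)
  qed
  then show fin: "finite F"
    unfolding F_def
    by (intro holomorphic_compact_finite_zeros[OF h open_UNIV connected_UNIV compact_cball]) auto
  define p where "p = (\<lambda>z. \<Prod>w\<in>F. z - w)"
  obtain g where g: "g holomorphic_on UNIV" and h_eq: "\<And>z. h z = p z * g z"
    using entire_factor_finite_zeros[OF fin _ h] unfolding F_def p_def by auto
  have h_fun: "h = (\<lambda>z. p z * g z)" using h_eq by blast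
  have p_hol: "p holomorphic_on UNIV" unfolding p_def by (intro holomorphic_intros)
  have g_nz: "g z \<noteq> 0" if z: "z \<in> ball 0 R" for z
  proof
    assume gz: "g z = 0"
    then have "z \<in> F" using z h_eq by (auto simp: F_def)
    then have pz: "p z = 0" using fin by (auto simp: p_def)
    have "deriv h z = p z * deriv g z + deriv p z * g z"
      unfolding h_fun
      using p_hol g by (intro deriv_mult holomorphic_on_imp_differentiable_at) auto
    then have "deriv h z = 0" by (simp add: pz gz)
    with simple gz h_eq show False by auto
  qed
  have "hfc (\<lambda>z. p z * g z) x = 0" using hx by (simp only: h_fun)
  then have "hfc p x = 0"
    using p_hol g g_nz xR
    by (intro hfc_cancel_nonvanishing_factor[of p R g]) (auto intro: holomorphic_on_subset)
  then show "hfc (\<lambda>z. \<Prod>w\<in>F. z - w) x = 0" by (simp only: p_def)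
qed

definition lagrange_basis :: "complex set \<Rightarrow> complex \<Rightarrow> complex \<Rightarrow> complex" where
  "lagrange_basis F w z = inverse (\<Prod>v\<in>F-{w}. w - v) * (\<Prod>v\<in>F-{w}. z - v)"

lemma lagrange_basis_at_node:
  assumes "finite F" "w \<in> F" "u \<in> F"
  shows "lagrange_basis F w u = (if u = w then 1 else 0)"
  using assms by (auto simp: lagrange_basis_def prod_zero_iff)

lemma sum_lagrange_basis:
  assumes fin: "finite F" and "F \<noteq> {}"
  shows "(\<Sum>w\<in>F. lagrange_basis F w z) = 1"
proof -
  define P where
    "P = (\<Sum>w\<in>F. smult (inverse (\<Prod>v\<in>F-{w}. w - v)) (\<Prod>v\<in>F-{w}. [:-v, 1:]))"
  have poly_P: "poly P y = (\<Sum>w\<in>F. lagrange_basis F w y)" for y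
    by (simp add: P_def poly_sum poly_prod lagrange_basis_def)
  have "degree (\<Prod>v\<in>F-{w}. [:-v, 1:]) \<le> card F - 1" if "w \<in> F" for w
    using degree_prod_sum_le[of "F - {w}" "\<lambda>v. [:-v, 1:]"] fin that by simp
  then have "degree P \<le> card F - 1"
    unfolding P_def by (intro degree_sum_le fin order.trans[OF degree_smult_le])
  moreover have "card F > 0" using assms by (simp add: card_gt_0_iff)
  moreover have "poly P u = poly 1 u" if "u \<in> F" for u
    using that fin by (simp add: poly_P lagrange_basis_at_node)
  ultimately have "P = 1"
    by (intro poly_eqI_degree[of F]) auto
  then show ?thesis by (simp flip: poly_P)
qed

lemma lagrange_basis_mult_linear:
  assumes "finite F" "w \<in> F"
  shows "lagrange_basis F w z * (z - w) = inverse (\<Prod>v\<in>F-{w}. w - v) * (\<Prod>v\<in>F. z - v)"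
  using assms by (simp add: lagrange_basis_def prod.remove mult_ac)

lemma hfc_lagrange_basis:
  fixes x :: "'a::cbanach_algebra_1"
  assumes fin: "finite F" and "F \<noteq> {}" and p_x: "hfc (\<lambda>z. \<Prod>w\<in>F. z - w) x = 0"
  defines "E w \<equiv> hfc (lagrange_basis F w) x"
  shows "(\<Sum>w\<in>F. E w) = 1"
    and "\<And>w. w \<in> F \<Longrightarrow> E w * x = scaleC w (E w)"
    and "\<And>w. w \<in> F \<Longrightarrow> x * E w = scaleC w (E w)"
proof -
  define R where "R = norm x + 1"
  have xR: "norm x < R" by (simp add: R_def)
  have L: "lagrange_basis F w holomorphic_on ball 0 R" for w
    unfolding lagrange_basis_def by (intro holomorphic_intros)
  have lin: "(\<lambda>z. z - w) holomorphic_on ball 0 R" for w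
    by (intro holomorphic_intros)
  have p: "(\<lambda>z. \<Prod>v\<in>F. z - v) holomorphic_on ball 0 R"
    by (intro holomorphic_intros)
  have "(\<Sum>w\<in>F. E w) = hfc (\<lambda>z. \<Sum>w\<in>F. lagrange_basis F w z) x"
    unfolding E_def by (rule hfc_sum[OF fin L xR, symmetric])
  then show "(\<Sum>w\<in>F. E w) = 1"
    using sum_lagrange_basis[OF assms(1,2)] by (simp add: hfc_const)
  fix w assume w: "w \<in> F"
  have right: "hfc (\<lambda>z. lagrange_basis F w z * (z - w)) x = 0"
    using p_x by (simp add: lagrange_basis_mult_linear[OF fin w] hfc_cmult[OF p xR])
  then have left: "hfc (\<lambda>z. (z - w) * lagrange_basis F w z) x = 0"
    by (simp only: mult.commute)
  have "E w * (x - scaleC w 1) = 0" and "(x - scaleC w 1) * E w = 0"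
    using right left by (simp_all add: E_def hfc_mult[OF L lin xR] hfc_mult[OF lin L xR] hfc_diff_const)
  then show "E w * x = scaleC w (E w)" and "x * E w = scaleC w (E w)"
    by (simp_all add: right_diff_distrib left_diff_distrib mult_scaleC_left mult_scaleC_right)
qed

lemma Cab_commutative: "Cab (w::'a::comm_ring_1) v n = (w - v) ^ n"
proof -
  have "(w - v) ^ n = (- v + w) ^ n" by simp
  also have "\<dots> = (\<Sum>k\<le>n. of_nat (n choose k) * (- v) ^ k * w ^ (n - k))"
    by (rule binomial_ring)
  also have "\<dots> = Cab w v n"
  proof (unfold Cab_def, intro sum.cong refl)
    fix k
    have sign: "(of_int ((-1) ^ k * int (n choose k)) :: 'a) = (-1) ^ k * of_nat (n choose k)"
      by simp
    show "of_nat (n choose k) * (- v) ^ k * w ^ (n - k) =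
        of_int ((-1) ^ k * int (n choose k)) * (w ^ (n - k) * v ^ k)"
      unfolding sign power_minus[of v k] by (simp only: mult_ac)
  qed
  finally show ?thesis ..
qed

lemma Cab_spectral_expansion:
  fixes a b :: "'a::cbanach_algebra_1"
  assumes "finite F" "finite G" and E: "(\<Sum>w\<in>F. E w) = 1" and Q: "(\<Sum>v\<in>G. Q v) = 1"
    and Ea: "\<And>w. w \<in> F \<Longrightarrow> E w * a = scaleC w (E w)"
    and bQ: "\<And>v. v \<in> G \<Longrightarrow> b * Q v = scaleC v (Q v)"
  shows "Cab a b n = (\<Sum>w\<in>F. \<Sum>v\<in>G. scaleC ((w - v) ^ n) (E w * Q v))"
proof -
  have monomial: "a ^ m * b ^ k = (\<Sum>w\<in>F. \<Sum>v\<in>G. scaleC (w ^ m * v ^ k) (E w * Q v))" for m k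
  proof -
    have "a ^ m * b ^ k = (\<Sum>w\<in>F. E w) * (a ^ m * b ^ k) * (\<Sum>v\<in>G. Q v)" by (simp add: E Q)
    also have "\<dots> = (\<Sum>w\<in>F. \<Sum>v\<in>G. (E w * a ^ m) * (b ^ k * Q v))"
      by (simp add: sum_distrib_left sum_distrib_right mult.assoc sum.swap[of _ G])
    also have "\<dots> = (\<Sum>w\<in>F. \<Sum>v\<in>G. scaleC (w ^ m * v ^ k) (E w * Q v))"
      by (intro sum.cong refl)
         (simp add: mult_power_eq_scaleC_power[OF Ea] power_mult_eq_scaleC_power[OF bQ] scaleC_mult_scaleC)
    finally show ?thesis .
  qed
  have "Cab a b n = (\<Sum>k\<le>n. \<Sum>w\<in>F. \<Sum>v\<in>G.
      scaleC (of_int ((-1) ^ k * int (n choose k)) * (w ^ (n - k) * v ^ k)) (E w * Q v))"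
    unfolding Cab_def
    by (intro sum.cong refl) (simp only: of_int_mult_eq_scaleC monomial scaleC.scale_sum_right scaleC_scaleC)
  also have "\<dots> = (\<Sum>w\<in>F. \<Sum>v\<in>G. \<Sum>k\<le>n.
      scaleC (of_int ((-1) ^ k * int (n choose k)) * (w ^ (n - k) * v ^ k)) (E w * Q v))"
    by (subst sum.swap) (simp only: sum.swap[of _ "{..n}"])
  also have "\<dots> = (\<Sum>w\<in>F. \<Sum>v\<in>G. scaleC (Cab w v n) (E w * Q v))"
    by (simp add: Cab_def scaleC.scale_sum_left)
  finally show ?thesis by (simp add: Cab_commutative)
qed

text \<open>The condition \<open>limsup \<parallel>s n\<parallel>\<^sup>1\<^sup>/\<^sup>n \<le> 0\<close> behind \<open>\<rho>(a,b) = 0\<close>, phrased without roots.\<close>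

definition decays_superexponentially :: "(nat \<Rightarrow> 'a::real_normed_vector) \<Rightarrow> bool" where
  "decays_superexponentially s \<longleftrightarrow>
     (\<forall>\<epsilon>>0. \<exists>K. \<forall>\<^sub>F n in sequentially. norm (s n) \<le> K * \<epsilon> ^ n)"

lemma rho_le_0_imp_decays_superexponentially:
  assumes "rho a b \<le> 0"
  shows "decays_superexponentially (Cab a b)"
  unfolding decays_superexponentially_def
proof (intro allI impI exI)
  fix \<epsilon> :: real assume "\<epsilon> > 0"
  with assms have "limsup (\<lambda>n. ereal (root n (norm (Cab a b n)))) < ereal \<epsilon>"
    unfolding rho_def by (simp add: le_less_trans)
  then have "\<forall>\<^sub>F n in sequentially. root n (norm (Cab a b n)) < \<epsilon>"
    by (auto dest: Limsup_lessD)
  then show "\<forall>\<^sub>F n in sequentially. norm (Cab a b n) \<le> 1 * \<epsilon> ^ n"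
    using eventually_ge_at_top[of 1]
  proof eventually_elim
    case (elim n)
    then have "root n (norm (Cab a b n)) ^ n \<le> \<epsilon> ^ n"
      by (intro power_mono) auto
    with elim show ?case by simp
  qed
qed

lemma decays_superexponentially_cong:
  assumes "\<forall>\<^sub>F n in sequentially. s n = t n" and "decays_superexponentially s"
  shows "decays_superexponentially t"
  unfolding decays_superexponentially_def
proof (intro allI impI)
  fix \<epsilon> :: real assume "\<epsilon> > 0"
  then obtain K where "\<forall>\<^sub>F n in sequentially. norm (s n) \<le> K * \<epsilon> ^ n"
    using assms(2) unfolding decays_superexponentially_def by blast
  with assms(1) have "\<forall>\<^sub>F n in sequentially. norm (t n) \<le> K * \<epsilon> ^ n"
    by eventually_elim simp
  then show "\<exists>K. \<forall>\<^sub>F n in sequentially. norm (t n) \<le> K * \<epsilon> ^ n" ..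
qed

lemma decays_superexponentially_shift_diff:
  fixes s :: "nat \<Rightarrow> 'a::cbanach_algebra_1"
  assumes "decays_superexponentially s"
  shows "decays_superexponentially (\<lambda>n. s (Suc n) - scaleC c (s n))"
  unfolding decays_superexponentially_def
proof (intro allI impI)
  fix \<epsilon> :: real assume "\<epsilon> > 0"
  then obtain K where K: "\<forall>\<^sub>F n in sequentially. norm (s n) \<le> K * \<epsilon> ^ n"
    using assms unfolding decays_superexponentially_def by blast
  moreover from K have "\<forall>\<^sub>F n in sequentially. norm (s (Suc n)) \<le> K * \<epsilon> ^ Suc n"
    by (rule eventually_sequentially_Suc[THEN iffD2])
  ultimately have "\<forall>\<^sub>F n in sequentially.
      norm (s (Suc n) - scaleC c (s n)) \<le> (K * (\<epsilon> + cmod c)) * \<epsilon> ^ n"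
  proof eventually_elim
    case (elim n)
    have "norm (s (Suc n) - scaleC c (s n)) \<le> norm (s (Suc n)) + cmod c * norm (s n)"
      using norm_triangle_ineq4 by (metis norm_scaleC)
    also have "\<dots> \<le> K * \<epsilon> ^ Suc n + cmod c * (K * \<epsilon> ^ n)"
      using elim by (intro add_mono mult_left_mono) auto
    also have "\<dots> = (K * (\<epsilon> + cmod c)) * \<epsilon> ^ n" by (simp add: algebra_simps)
    finally show ?case .
  qed
  then show "\<exists>K. \<forall>\<^sub>F n in sequentially. norm (s (Suc n) - scaleC c (s n)) \<le> K * \<epsilon> ^ n" ..
qed

lemma decays_superexponentially_geometric_imp_eq_0:
  fixes y :: "'a::cbanach_algebra_1"
  assumes "c \<noteq> 0" and "decays_superexponentially (\<lambda>n. scaleC (c ^ n) y)"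
  shows "y = 0"
proof -
  obtain K where K: "\<forall>\<^sub>F n in sequentially. norm (scaleC (c ^ n) y) \<le> K * (cmod c / 2) ^ n"
    using assms unfolding decays_superexponentially_def by (meson divide_pos_pos zero_less_norm_iff zero_less_numeral)
  then have "\<forall>\<^sub>F n in sequentially. norm y \<le> K * (1 / 2) ^ n"
  proof eventually_elim
    case (elim n)
    then have "cmod c ^ n * norm y \<le> cmod c ^ n * (K * (1 / 2) ^ n)"
      by (simp add: norm_scaleC norm_power power_divide mult_ac)
    then show ?case using assms(1) by (simp add: mult_le_cancel_left_pos)
  qed
  moreover have "(\<lambda>n. K * (1 / 2 :: real) ^ n) \<longlonglongrightarrow> 0"
    by (intro tendsto_mult_right_zero LIMSEQ_power_zero) simp
  ultimately have "norm y \<le> 0"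
    by (intro tendsto_lowerbound) auto
  then show ?thesis by simp
qed

text \<open>Distinct exponentials are separated by induction: the operator
  \<open>s \<mapsto> (\<lambda>n. s (Suc n) - c\<^sub>0 s n)\<close> preserves superexponential decay and removes the
  frequency \<open>c\<^sub>0\<close> while rescaling the other coefficients by \<open>c - c\<^sub>0 \<noteq> 0\<close>.\<close>

lemma exp_sum_decays_imp_coeff_eq_0:
  fixes y :: "complex \<Rightarrow> 'a::cbanach_algebra_1"
  assumes "finite C" and "decays_superexponentially (\<lambda>n. \<Sum>c\<in>C. scaleC (c ^ n) (y c))"
  shows "\<forall>c\<in>C. c \<noteq> 0 \<longrightarrow> y c = 0"
  using assms
proof (induction C arbitrary: y rule: finite_induct)
  case (insert c0 C)
  define S where "S = (\<lambda>n. \<Sum>c\<in>insert c0 C. scaleC (c ^ n) (y c))"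
  have decays_S: "decays_superexponentially S"
    using insert.prems by (simp add: S_def)
  have "S (Suc n) - scaleC c0 (S n) = (\<Sum>c\<in>C. scaleC (c ^ n) (scaleC (c - c0) (y c)))" for n
  proof -
    have "scaleC (c ^ Suc n) (y c) - scaleC c0 (scaleC (c ^ n) (y c)) =
        scaleC (c ^ n) (scaleC (c - c0) (y c))" for c
    proof -
      have "c ^ Suc n - c0 * c ^ n = c ^ n * (c - c0)" by (simp add: algebra_simps)
      then show ?thesis by (simp flip: scaleC.scale_left_diff_distrib)
    qed
    then show ?thesis
      using insert(1,2) by (simp add: S_def scaleC.scale_sum_right algebra_simps flip: sum_subtractf)
  qed
  moreover have "decays_superexponentially (\<lambda>n. S (Suc n) - scaleC c0 (S n))"
    using decays_S by (rule decays_superexponentially_shift_diff)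
  ultimately have "\<forall>c\<in>C. c \<noteq> 0 \<longrightarrow> scaleC (c - c0) (y c) = 0"
    by (intro insert.IH) simp
  then have y_C: "\<forall>c\<in>C. c \<noteq> 0 \<longrightarrow> y c = 0"
    using insert(2) by auto
  have "y c0 = 0" if "c0 \<noteq> 0"
  proof (rule decays_superexponentially_geometric_imp_eq_0[OF that])
    have "S n = scaleC (c0 ^ n) (y c0)" if "n \<ge> 1" for n
      using insert(1,2) y_C that by (auto simp: S_def intro!: sum.neutral)
    then have "\<forall>\<^sub>F n in sequentially. S n = scaleC (c0 ^ n) (y c0)"
      using eventually_ge_at_top[of 1] by (rule eventually_mono[rotated])
    then show "decays_superexponentially (\<lambda>n. scaleC (c0 ^ n) (y c0))"
      using decays_S by (rule decays_superexponentially_cong)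
  qed
  with y_C show ?case by auto
qed simp

lemma exp_sum_decays_imp_sum_eq_0:
  fixes y :: "'i \<Rightarrow> 'a::cbanach_algebra_1"
  assumes "finite I" and "decays_superexponentially (\<lambda>n. \<Sum>i\<in>I. scaleC (f i ^ n) (y i))"
  shows "(\<Sum>i\<in>I. scaleC (f i) (y i)) = 0"
proof -
  define Y where "Y c = (\<Sum>i\<in>{i \<in> I. f i = c}. y i)" for c
  have group: "(\<Sum>i\<in>I. scaleC (f i ^ n) (y i)) = (\<Sum>c\<in>f ` I. scaleC (c ^ n) (Y c))" for n
    using sum.image_gen[OF assms(1), of "\<lambda>i. scaleC (f i ^ n) (y i)" f]
    by (simp add: Y_def scaleC.scale_sum_right)
  have "\<forall>c\<in>f ` I. c \<noteq> 0 \<longrightarrow> Y c = 0"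
    using assms by (intro exp_sum_decays_imp_coeff_eq_0) (simp_all add: group)
  then show ?thesis
    using group[of 1] by (auto intro!: sum.neutral)
qed

theorem theorem2p2:
  fixes a b :: "'a::cbanach_algebra_1" and h :: "complex \<Rightarrow> complex"
  assumes "d_rho a b = 0"
    and "h holomorphic_on UNIV"
    and "\<exists>z. h z \<noteq> 0"
    and "\<forall>z. h z = 0 \<longrightarrow> deriv h z \<noteq> 0"
    and "hfc h a = 0" and "hfc h b = 0"
  shows "a = b"
proof -
  define R where "R = max (norm a) (norm b) + 1"
  define F where "F = {z \<in> cball 0 R. h z = 0}"
  have "norm a < R" "norm b < R" by (auto simp: R_def)
  then have fin: "finite F" and p_a: "hfc (\<lambda>z. \<Prod>w\<in>F. z - w) a = 0"
    and p_b: "hfc (\<lambda>z. \<Prod>w\<in>F. z - w) b = 0"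
    using hfc_root_poly_eq_0[OF assms(2-4)] assms(5,6) unfolding F_def by blast+
  have "F \<noteq> {}" using p_a by (auto simp: hfc_const)
  note E = hfc_lagrange_basis[OF fin this p_a] and Q = hfc_lagrange_basis[OF fin this p_b]
  define X where "X p = hfc (lagrange_basis F (fst p)) a * hfc (lagrange_basis F (snd p)) b" for p
  have expansion: "Cab a b = (\<lambda>n. \<Sum>p\<in>F \<times> F. scaleC ((fst p - snd p) ^ n) (X p))"
    by (simp add: fun_eq_iff Cab_spectral_expansion[OF fin fin E(1) Q(1) E(2) Q(3)]
        sum.cartesian_product X_def case_prod_beta)
  have "rho a b \<le> 0" using assms(1) unfolding d_rho_def by (metis max.cobounded1)
  then have "decays_superexponentially (Cab a b)"
    by (rule rho_le_0_imp_decays_superexponentially)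
  then have "(\<Sum>p\<in>F \<times> F. scaleC (fst p - snd p) (X p)) = 0"
    using fin by (intro exp_sum_decays_imp_sum_eq_0) (simp_all add: expansion)
  moreover have "a - b = Cab a b 1" by (simp add: Cab_def)
  ultimately show "a = b" by (simp add: expansion)
qed

end
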